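(* For every integer $t\geq3$ and every $\varepsilon>0$ there exists $\varepsilon'>0$ such that no $n$-vertex $K_t$-free graph $G$ that is $d$-regular with $d\geq\left(\frac{3t-8}{3t-5}+\varepsilon\right)n$ contains $t+1$ vertices that are pairwise $\varepsilon'$-disjoint.
   Context: Let $\mathcal{K}$ be the set of cliques (vertex sets) of size $t-2$ in $G$. For $u,v\in V(G)$, let $\mathcal{F}_{uv}$ be the set of $K\in\mathcal{K}$ such that both $K\cup\{u\}$ and $K\cup\{v\}$ are cliques of size $t-1$ (in particular $u,v\notin K$). Two vertices $u,v$ are $\varepsilon'$-disjoint if $|\mathcal{F}_{uv}|\leq\varepsilon'|\mathcal{K}|$. *)

theory Defs
  imports Complex_Main
begin

text \<open>A finite simple graph on vertex set V (vertices are naturals; every finite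
graph is isomorphic to one of these) with symmetric irreflexive adjacency E.\<close>
definition simple_graph :: "nat set \<Rightarrow> (nat \<Rightarrow> nat \<Rightarrow> bool) \<Rightarrow> bool" where
  "simple_graph V E \<longleftrightarrow> finite V \<and> (\<forall>u v. E u v \<longrightarrow> u \<in> V \<and> v \<in> V)
     \<and> (\<forall>u v. E u v \<longrightarrow> E v u) \<and> (\<forall>u. \<not> E u u)"

definition is_clique :: "nat set \<Rightarrow> (nat \<Rightarrow> nat \<Rightarrow> bool) \<Rightarrow> nat set \<Rightarrow> bool" where
  "is_clique V E K \<longleftrightarrow> K \<subseteq> V \<and> (\<forall>u\<in>K. \<forall>v\<in>K. u \<noteq> v \<longrightarrow> E u v)"

definition cliques :: "nat set \<Rightarrow> (nat \<Rightarrow> nat \<Rightarrow> bool) \<Rightarrow> nat \<Rightarrow> nat set set" where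
  "cliques V E k = {K. is_clique V E K \<and> card K = k}"

definition Kt_free :: "nat set \<Rightarrow> (nat \<Rightarrow> nat \<Rightarrow> bool) \<Rightarrow> nat \<Rightarrow> bool" where
  "Kt_free V E t \<longleftrightarrow> cliques V E t = {}"

definition degree :: "nat set \<Rightarrow> (nat \<Rightarrow> nat \<Rightarrow> bool) \<Rightarrow> nat \<Rightarrow> nat" where
  "degree V E u = card {v \<in> V. E u v}"

definition regular :: "nat set \<Rightarrow> (nat \<Rightarrow> nat \<Rightarrow> bool) \<Rightarrow> nat \<Rightarrow> bool" where
  "regular V E d \<longleftrightarrow> (\<forall>u\<in>V. degree V E u = d)"

definition F_uv :: "nat set \<Rightarrow> (nat \<Rightarrow> nat \<Rightarrow> bool) \<Rightarrow> nat \<Rightarrow> nat \<Rightarrow> nat \<Rightarrow> nat set set" where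
  "F_uv V E t u v = {K \<in> cliques V E (t - 2).
      insert u K \<in> cliques V E (t - 1) \<and> insert v K \<in> cliques V E (t - 1)}"

definition eps_disjoint :: "nat set \<Rightarrow> (nat \<Rightarrow> nat \<Rightarrow> bool) \<Rightarrow> nat \<Rightarrow> real \<Rightarrow> nat \<Rightarrow> nat \<Rightarrow> bool" where
  "eps_disjoint V E t e u v \<longleftrightarrow>
     real (card (F_uv V E t u v)) \<le> e * real (card (cliques V E (t - 2)))"

end

theory Submission
  imports Defs
begin

text \<open>Induction on \<open>t\<close>, with regularity weakened to minimum degree at least
  \<open>(\<alpha>\<^sub>t + \<epsilon>) n\<close>, where \<open>\<alpha>\<^sub>t = (3t - 8)/(3t - 5)\<close>. For \<open>t = 3\<close> the degrees of the
  four vertices of \<open>S\<close> sum to more than \<open>n + 4\<epsilon>n\<close>, so some pair of \<open>S\<close> has more than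
  \<open>\<epsilon>n/4\<close> common neighbours, and a common neighbour is an element of \<open>F\<^sub>u\<^sub>v\<close>.
  For the step from \<open>t - 1\<close> to \<open>t\<close>: the graph induced on a neighbourhood \<open>N(v)\<close> is
  \<open>K\<^bsub>t-1\<^esub>\<close>-free and, because \<open>2\<alpha>\<^sub>t - 1 = \<alpha>\<^bsub>t-1\<^esub>\<alpha>\<^sub>t\<close>, has minimum degree
  at least \<open>(\<alpha>\<^bsub>t-1\<^esub> + \<epsilon>/2) |N(v)|\<close>. Averaging the degrees of \<open>S\<close> (for \<open>t = 4\<close>,
  counting triangles) gives \<open>\<epsilon>n\<close> vertices \<open>v\<close> adjacent to \<open>t\<close> vertices of \<open>S\<close>. By induction
  each such \<open>N(v)\<close> contains a pair of \<open>S\<close> whose family \<open>F\<close> in \<open>N(v)\<close> is a positive fraction of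
  the \<open>\<Omega>(n\<^bsup>t-3\<^esup>)\<close> cliques of size \<open>t - 3\<close> in \<open>N(v)\<close>. Adding \<open>v\<close> turns these into
  elements of \<open>F\<^sub>s\<^sub>s\<^sub>'\<close> in \<open>G\<close>, each obtained at most \<open>t - 2\<close> times, so some pair of
  \<open>S\<close> has \<open>|F\<^sub>s\<^sub>s\<^sub>'| = \<Omega>(n\<^bsup>t-2\<^esup>)\<close> and is not \<open>\<epsilon>'\<close>-disjoint.\<close>

definition neighbours :: "(nat \<Rightarrow> nat \<Rightarrow> bool) \<Rightarrow> nat \<Rightarrow> nat set" where
  "neighbours E u = {w. E u w}"

definition induced :: "(nat \<Rightarrow> nat \<Rightarrow> bool) \<Rightarrow> nat set \<Rightarrow> nat \<Rightarrow> nat \<Rightarrow> bool" where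
  "induced E D = (\<lambda>a b. E a b \<and> a \<in> D \<and> b \<in> D)"

definition cliques_in :: "nat set \<Rightarrow> (nat \<Rightarrow> nat \<Rightarrow> bool) \<Rightarrow> nat \<Rightarrow> nat set \<Rightarrow> nat set set" where
  "cliques_in V E j D = {K \<in> cliques V E j. K \<subseteq> D}"

definition min_degree_ge :: "nat set \<Rightarrow> (nat \<Rightarrow> nat \<Rightarrow> bool) \<Rightarrow> real \<Rightarrow> bool" where
  "min_degree_ge V E x \<longleftrightarrow> (\<forall>u\<in>V. x * real (card V) \<le> real (degree V E u))"

definition pairwise_eps_disjoint ::
    "nat set \<Rightarrow> (nat \<Rightarrow> nat \<Rightarrow> bool) \<Rightarrow> nat \<Rightarrow> real \<Rightarrow> nat set \<Rightarrow> bool" where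
  "pairwise_eps_disjoint V E t e S \<longleftrightarrow> (\<forall>u\<in>S. \<forall>v\<in>S. u \<noteq> v \<longrightarrow> eps_disjoint V E t e u v)"

lemma simple_graph_finite: "simple_graph V E \<Longrightarrow> finite V"
  by (simp add: simple_graph_def)

lemma simple_graph_sym: "simple_graph V E \<Longrightarrow> E u v \<Longrightarrow> E v u"
  by (simp add: simple_graph_def)

lemma simple_graph_irrefl: "simple_graph V E \<Longrightarrow> \<not> E u u"
  by (simp add: simple_graph_def)

lemma neighbours_subset: "simple_graph V E \<Longrightarrow> neighbours E u \<subseteq> V"
  by (auto simp: simple_graph_def neighbours_def)

lemma finite_neighbours: "simple_graph V E \<Longrightarrow> finite (neighbours E u)"
  by (meson finite_subset neighbours_subset simple_graph_finite)

lemma degree_eq_card_neighbours: "simple_graph V E \<Longrightarrow> degree V E u = card (neighbours E u)"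
  unfolding degree_def by (rule arg_cong[where f = card]) (auto simp: simple_graph_def neighbours_def)

lemma card_non_neighbours:
  "simple_graph V E \<Longrightarrow> card (V - neighbours E u) = card V - degree V E u"
  by (simp add: degree_eq_card_neighbours neighbours_subset card_Diff_subset finite_neighbours)

lemma degree_less_card: "simple_graph V E \<Longrightarrow> u \<in> V \<Longrightarrow> degree V E u < card V"
proof -
  assume g: "simple_graph V E" and u: "u \<in> V"
  have "neighbours E u \<subset> V"
    using neighbours_subset[OF g] simple_graph_irrefl[OF g] u by (auto simp: neighbours_def)
  then show ?thesis
    by (simp add: degree_eq_card_neighbours[OF g] psubset_card_mono simple_graph_finite[OF g])
qed

lemma finite_clique: "simple_graph V E \<Longrightarrow> is_clique V E K \<Longrightarrow> finite K"
  by (meson is_clique_def finite_subset simple_graph_finite)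

lemma finite_cliques: "simple_graph V E \<Longrightarrow> finite (cliques V E k)"
  by (rule finite_subset[of _ "Pow V"]) (auto simp: cliques_def is_clique_def simple_graph_finite)

lemma finite_cliques_in: "simple_graph V E \<Longrightarrow> finite (cliques_in V E k D)"
  by (simp add: cliques_in_def finite_cliques)

lemma finite_F_uv: "simple_graph V E \<Longrightarrow> finite (F_uv V E t s s')"
  by (simp add: F_uv_def finite_cliques)

lemma card_cliques_le_power: "simple_graph V E \<Longrightarrow> real (card (cliques V E k)) \<le> real (card V) ^ k"
proof -
  assume g: "simple_graph V E"
  have fV: "finite V" using g by (rule simple_graph_finite)
  have "card (cliques V E k) \<le> card {B. B \<subseteq> V \<and> card B = k}"
    by (rule card_mono) (auto simp: fV cliques_def is_clique_def)
  also have "\<dots> = card V choose k" using n_subsets fV by blast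
  also have "\<dots> \<le> card V ^ k"
    by (cases "k \<le> card V") (auto simp: binomial_le_pow binomial_eq_0)
  finally show ?thesis by (metis of_nat_le_iff of_nat_power)
qed

lemma insert_mem_cliques:
  assumes g: "simple_graph V E" and "K \<in> cliques V E j" "v \<in> V" "K \<subseteq> neighbours E v"
  shows "insert v K \<in> cliques V E (Suc j)" "v \<notin> K"
proof -
  show "v \<notin> K" using assms simple_graph_irrefl[OF g] by (auto simp: neighbours_def)
  then show "insert v K \<in> cliques V E (Suc j)"
    using assms finite_clique[OF g] simple_graph_sym[OF g]
    by (auto simp: cliques_def is_clique_def neighbours_def)
qed

lemma min_degree_geD:
  "min_degree_ge V E x \<Longrightarrow> u \<in> V \<Longrightarrow> x * real (card V) \<le> real (degree V E u)"
  by (simp add: min_degree_ge_def)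

lemma min_degree_lt_1:
  assumes "simple_graph V E" "min_degree_ge V E x" "u \<in> V"
  shows "x < 1"
proof -
  have "x * real (card V) < real (card V)"
    using min_degree_geD[OF assms(2,3)] degree_less_card[OF assms(1,3)] by linarith
  then show ?thesis by (simp add: mult_less_cancel_right2)
qed

lemma card_non_neighbours_le:
  assumes "simple_graph V E" "min_degree_ge V E x" "u \<in> V"
  shows "real (card (V - neighbours E u)) \<le> real (card V) - x * real (card V)"
  using card_non_neighbours[OF assms(1)] degree_less_card[OF assms(1,3)] min_degree_geD[OF assms(2,3)]
  by simp

lemma card_le_1_plus_ordered_pairs:
  assumes "finite S"
  shows "real (card {s\<in>S. P s}) \<le> 1 + (\<Sum>s\<in>S. \<Sum>s'\<in>S-{s}. of_bool (P s \<and> P s'))"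
proof -
  define m where "m = real (card {s\<in>S. P s})"
  have "(\<Sum>s\<in>S. \<Sum>s'\<in>S-{s}. of_bool (P s \<and> P s')) = (\<Sum>s\<in>{s\<in>S. P s}. m - 1)"
  proof -
    have "(\<Sum>s'\<in>S-{s}. of_bool (P s \<and> P s')) = of_bool (P s) * (m - 1)" if "s \<in> S" for s
    proof (cases "P s")
      case True
      then have "1 \<le> card {s\<in>S. P s}" using that assms by (simp add: Suc_le_eq card_gt_0_iff) blast
      moreover have "(S - {s}) \<inter> {s'. P s'} = {s\<in>S. P s} - {s}" by blast
      ultimately show ?thesis using True that assms by (simp add: m_def card_Diff_singleton)
    qed simp
    then show ?thesis using assms by (simp add: sum.If_cases[symmetric] Int_def)
  qed
  also have "\<dots> = m * (m - 1)" by (simp add: m_def)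
  finally have "(\<Sum>s\<in>S. \<Sum>s'\<in>S-{s}. of_bool (P s \<and> P s')) = m * (m - 1)" .
  moreover have "0 \<le> (m - 1) * (m - 1)" by simp
  ultimately show ?thesis unfolding m_def[symmetric] by (simp add: algebra_simps)
qed

lemma sum_ordered_pairs_le:
  fixes f :: "nat \<Rightarrow> nat \<Rightarrow> real"
  assumes "finite S" and "\<And>s s'. s \<in> S \<Longrightarrow> s' \<in> S \<Longrightarrow> s \<noteq> s' \<Longrightarrow> f s s' \<le> c"
  shows "(\<Sum>s\<in>S. \<Sum>s'\<in>S-{s}. f s s') \<le> real (card S) * (real (card S) - 1) * c"
proof -
  have "(\<Sum>s\<in>S. \<Sum>s'\<in>S-{s}. f s s') \<le> (\<Sum>s\<in>S. \<Sum>s'\<in>S-{s}. c)"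
    by (intro sum_mono) (use assms(2) in auto)
  also have "\<dots> = real (card S) * (real (card S) - 1) * c"
    using assms(1) by (cases "S = {}") (auto simp: card_Diff_singleton Suc_le_eq card_gt_0_iff)
  finally show ?thesis .
qed

lemma double_count_by_insert:
  assumes "finite I" "finite A" "\<And>K. K \<in> A \<Longrightarrow> finite K \<and> card K = j"
    and "\<And>v K. v \<in> I \<Longrightarrow> K \<in> B v \<Longrightarrow> v \<notin> K \<and> insert v K \<in> A"
  shows "(\<Sum>v\<in>I. card (B v)) \<le> j * card A"
proof -
  have fB: "finite (B v)" if "v \<in> I" for v
  proof -
    have "inj_on (insert v) (B v)" using assms(4)[OF that] by (meson inj_onI insert_ident)
    moreover have "insert v ` B v \<subseteq> A" using assms(4)[OF that] by blast
    ultimately show ?thesis by (meson assms(2) finite_imageD finite_subset)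
  qed
  have "(\<Sum>v\<in>I. card (B v)) = card (SIGMA v:I. B v)" using fB assms(1) by simp
  also have "\<dots> \<le> card (SIGMA K:A. K)"
  proof (rule card_inj_on_le[where f = "\<lambda>(v, K). (insert v K, v)"])
    show "inj_on (\<lambda>(v, K). (insert v K, v)) (SIGMA v:I. B v)"
      using assms(4) by (auto intro!: inj_onI simp: insert_ident)
    show "(\<lambda>(v, K). (insert v K, v)) ` (SIGMA v:I. B v) \<subseteq> (SIGMA K:A. K)"
      using assms(4) by auto
    show "finite (SIGMA K:A. K)" using assms(2,3) by blast
  qed
  also have "\<dots> = j * card A" using assms(2,3) by simp
  finally show ?thesis .
qed

lemma card_cliques_in_lower_bound:
  assumes g: "simple_graph V E" and non_nb: "\<And>u. u \<in> V \<Longrightarrow> real (card (V - neighbours E u)) \<le> b"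
    and "b \<ge> 0"
  shows "C \<subseteq> V \<Longrightarrow> m \<ge> 0 \<Longrightarrow> real k * b + m \<le> real (card C) \<Longrightarrow>
         m ^ Suc k / fact (Suc k) \<le> real (card (cliques_in V E (Suc k) C))"
proof (induction k arbitrary: C)
  case 0
  have "cliques_in V E (Suc 0) C = (\<lambda>v. {v}) ` C"
    using "0.prems"(1) by (auto simp: cliques_in_def cliques_def is_clique_def card_Suc_eq)
  moreover have "card ((\<lambda>v. {v}) ` C) = card C" by (rule card_image) (simp add: inj_on_def)
  ultimately show ?case using "0.prems" by simp
next
  case (Suc k)
  have fC: "finite C" using Suc.prems(1) g finite_subset simple_graph_finite by blast
  have nb_bound: "m ^ Suc k / fact (Suc k) \<le> real (card (cliques_in V E (Suc k) (C \<inter> neighbours E v)))"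
    if v: "v \<in> C" for v
  proof (rule Suc.IH)
    have "card (C - neighbours E v) \<le> card (V - neighbours E v)"
      using Suc.prems(1) g by (intro card_mono) (auto simp: simple_graph_finite)
    moreover have "card C = card (C \<inter> neighbours E v) + card (C - neighbours E v)"
      using fC by (metis card_Int_Diff)
    ultimately have "real (card C) \<le> real (card (C \<inter> neighbours E v)) + b"
      using non_nb[of v] v Suc.prems(1) by force
    then show "real k * b + m \<le> real (card (C \<inter> neighbours E v))"
      using Suc.prems(3) by (simp add: algebra_simps)
  qed (use Suc.prems in auto)
  have "m * (m ^ Suc k / fact (Suc k)) \<le> real (card C) * (m ^ Suc k / fact (Suc k))"
    using Suc.prems(2,3) \<open>b \<ge> 0\<close>
    by (intro mult_right_mono) (auto intro: order_trans[rotated] simp: add_increasing)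
  also have "\<dots> \<le> (\<Sum>v\<in>C. real (card (cliques_in V E (Suc k) (C \<inter> neighbours E v))))"
    using sum_mono[of C "\<lambda>_. m ^ Suc k / fact (Suc k)", OF nb_bound] by simp
  also have "\<dots> \<le> real (Suc (Suc k) * card (cliques_in V E (Suc (Suc k)) C))"
    unfolding of_nat_sum[symmetric] of_nat_le_iff
  proof (rule double_count_by_insert[OF fC finite_cliques_in[OF g]])
    show "finite K \<and> card K = Suc (Suc k)" if "K \<in> cliques_in V E (Suc (Suc k)) C" for K
      using that finite_clique[OF g] by (auto simp: cliques_in_def cliques_def)
    show "v \<notin> K \<and> insert v K \<in> cliques_in V E (Suc (Suc k)) C"
      if "v \<in> C" "K \<in> cliques_in V E (Suc k) (C \<inter> neighbours E v)" for v K
      using that insert_mem_cliques[OF g, of K "Suc k" v] Suc.prems(1) by (auto simp: cliques_in_def)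
  qed
  finally have "m ^ Suc (Suc k) / fact (Suc k) \<le> real (Suc (Suc k)) * real (card (cliques_in V E (Suc (Suc k)) C))"
    by (simp only: power_Suc times_divide_eq_right of_nat_mult)
  then have "m ^ Suc (Suc k) / fact (Suc k) / real (Suc (Suc k)) \<le> real (card (cliques_in V E (Suc (Suc k)) C))"
    by (subst pos_divide_le_eq) (simp_all add: mult.commute)
  then show ?case by (metis divide_divide_eq_left fact_Suc mult.commute)
qed

section \<open>Graphs induced on neighbourhoods\<close>

lemma simple_graph_induced: "simple_graph V E \<Longrightarrow> D \<subseteq> V \<Longrightarrow> simple_graph D (induced E D)"
  by (auto simp: simple_graph_def induced_def intro: finite_subset)

lemma cliques_induced: "D \<subseteq> V \<Longrightarrow> cliques D (induced E D) j = cliques_in V E j D"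
  by (auto simp: cliques_def cliques_in_def is_clique_def induced_def)

lemma Kt_free_neighbourhood:
  assumes g: "simple_graph V E" and "Kt_free V E (Suc j)" and "v \<in> V"
  shows "Kt_free (neighbours E v) (induced E (neighbours E v)) j"
  using assms insert_mem_cliques[OF g _ \<open>v \<in> V\<close>]
  by (auto simp: Kt_free_def cliques_induced[OF neighbours_subset[OF g]] cliques_in_def)

lemma degree_induced_ge:
  assumes g: "simple_graph V E" and D: "D \<subseteq> V" and "u \<in> D"
  shows "real (degree V E u) - (real (card V) - real (card D)) \<le> real (degree D (induced E D) u)"
proof -
  have fV: "finite V" using g by (rule simple_graph_finite)
  have "card (neighbours E u) \<le> card ((neighbours E u \<inter> D) \<union> (V - D))"
    using fV neighbours_subset[OF g] by (intro card_mono) (auto intro: finite_subset)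
  also have "\<dots> \<le> card (neighbours E u \<inter> D) + card (V - D)" by (rule card_Un_le)
  also have "card (V - D) = card V - card D" using D fV by (simp add: card_Diff_subset finite_subset)
  finally have "card (neighbours E u) \<le> card (neighbours E u \<inter> D) + (card V - card D)" .
  moreover have "card D \<le> card V" using D fV by (simp add: card_mono)
  ultimately have "real (card (neighbours E u)) \<le> real (card (neighbours E u \<inter> D)) + (real (card V) - real (card D))"
    by (metis of_nat_add of_nat_diff of_nat_le_iff)
  moreover have "{w \<in> D. induced E D u w} = neighbours E u \<inter> D"
    using \<open>u \<in> D\<close> by (auto simp: induced_def neighbours_def)
  ultimately show ?thesis by (simp add: degree_def[of D] degree_eq_card_neighbours[OF g])
qed

lemma F_uv_neighbourhood_insert:
  assumes g: "simple_graph V E" and v: "v \<in> V"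
    and K: "K \<in> F_uv (neighbours E v) (induced E (neighbours E v)) (j + 2) s s'"
  shows "v \<notin> K \<and> insert v K \<in> F_uv V E (j + 3) s s'"
proof -
  note cl = cliques_induced[OF neighbours_subset[OF g]]
  have K': "K \<in> cliques V E j" "K \<subseteq> neighbours E v"
    and sK: "insert s K \<in> cliques V E (Suc j)" "insert s K \<subseteq> neighbours E v"
    and s'K: "insert s' K \<in> cliques V E (Suc j)" "insert s' K \<subseteq> neighbours E v"
    using K by (simp_all add: F_uv_def cl cliques_in_def)
  have lift: "insert v (insert x K) \<in> cliques V E (Suc (Suc j))"
    if "insert x K \<in> cliques V E (Suc j)" "insert x K \<subseteq> neighbours E v" for x
    by (rule insert_mem_cliques(1)[OF g that(1) v that(2)])
  have "j + 3 - 2 = Suc j" "j + 3 - 1 = Suc (Suc j)" by simp_all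
  then show ?thesis
    using insert_mem_cliques[OF g K'(1) v K'(2)] lift[OF sK] lift[OF s'K]
    unfolding F_uv_def by (simp add: insert_commute)
qed

lemma sum_card_F_uv_neighbourhoods_le:
  assumes g: "simple_graph V E"
  shows "(\<Sum>v\<in>V. card (F_uv (neighbours E v) (induced E (neighbours E v)) (j + 2) s s'))
    \<le> (j + 1) * card (F_uv V E (j + 3) s s')"
proof (rule double_count_by_insert[OF simple_graph_finite[OF g]])
  show "finite (F_uv V E (j + 3) s s')" by (rule finite_F_uv[OF g])
  show "finite K \<and> card K = j + 1" if "K \<in> F_uv V E (j + 3) s s'" for K
    using that finite_clique[OF g] by (auto simp: F_uv_def cliques_def)
qed (rule F_uv_neighbourhood_insert[OF g])

definition degree_threshold :: "nat \<Rightarrow> real" where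
  "degree_threshold t = (3 * real t - 8) / (3 * real t - 5)"

definition no_disjoint_tuple :: "nat \<Rightarrow> real \<Rightarrow> real \<Rightarrow> bool" where
  "no_disjoint_tuple t \<epsilon> \<epsilon>' \<longleftrightarrow> (\<forall>(V :: nat set) (E :: nat \<Rightarrow> nat \<Rightarrow> bool).
     simple_graph V E \<longrightarrow> Kt_free V E t \<longrightarrow> min_degree_ge V E (degree_threshold t + \<epsilon>) \<longrightarrow>
     \<not> (\<exists>S \<subseteq> V. card S = t + 1 \<and> pairwise_eps_disjoint V E t \<epsilon>' S))"

lemma degree_threshold_add_4: "degree_threshold (k + 4) = (3 * real k + 4) / (3 * real k + 7)"
  by (simp add: degree_threshold_def algebra_simps)

lemma degree_threshold_add_3: "degree_threshold (k + 3) = (3 * real k + 1) / (3 * real k + 4)"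
  by (simp add: degree_threshold_def algebra_simps)

lemma degree_threshold_recurrence:
  "2 * degree_threshold (k + 4) - 1 = degree_threshold (k + 3) * degree_threshold (k + 4)"
proof -
  have "3 * real k + 4 > 0" "3 * real k + 7 > 0" by simp_all
  then have "2 * degree_threshold (k + 4) - 1 = (3 * real k + 1) / (3 * real k + 7)"
    "degree_threshold (k + 3) * degree_threshold (k + 4) = (3 * real k + 1) / (3 * real k + 7)"
    unfolding degree_threshold_add_4 degree_threshold_add_3 by (simp add: field_simps, simp)
  then show ?thesis by simp
qed

lemma degree_threshold_add_3_le: "degree_threshold (k + 3) \<le> degree_threshold (k + 4)"
  unfolding degree_threshold_add_4 degree_threshold_add_3 by (simp add: field_simps)

lemma degree_threshold_add_3_le_1: "degree_threshold (k + 3) \<le> 1"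
  unfolding degree_threshold_add_3 by simp

lemma degree_threshold_common_neighbourhood:
  "(real k + 1) * degree_threshold (k + 4) - real k = 4 / (3 * real k + 7)"
  unfolding degree_threshold_add_4 by (simp add: field_simps)

text \<open>The right-hand side is affine in \<open>n'\<close>, so it suffices to check the endpoints
  \<open>n' = x n\<close> (where the recurrence of the thresholds enters) and \<open>n' = n\<close>.\<close>
lemma neighbourhood_degree_arith:
  fixes a a' x e n n' :: real
  assumes rel: "2 * a - 1 = a' * a" and aa: "a' \<le> a" and a1: "a' \<le> 1" and x: "x = a + e"
    and e: "e > 0" and x1: "x \<le> 1" and n: "n \<ge> 0" and n1: "x * n \<le> n'" and n2: "n' \<le> n"
  shows "(a' + e / 2) * n' \<le> x * n - n + n'"
proof -
  define c where "c = 1 - a' - e / 2"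
  have at_xn: "0 \<le> x * n - n + c * (x * n)"
  proof -
    have "x * n - n + c * (x * n) = n * ((2 * x - 1) - a' * x - e * x / 2)"
      by (simp add: c_def algebra_simps)
    also have "(2 * x - 1) - a' * x = e * (2 - a')" using rel x by (simp add: algebra_simps)
    finally have "x * n - n + c * (x * n) = n * (e * (2 - a') - e * x / 2)" .
    moreover have "e * x \<le> e * (2 - a')" using x1 a1 e by (intro mult_left_mono) auto
    moreover have "0 \<le> e * (2 - a')" using a1 e by simp
    ultimately show ?thesis using n by simp
  qed
  have at_n: "0 \<le> x * n - n + c * n"
  proof -
    have "x * n - n + c * n = (x - (a' + e / 2)) * n" by (simp add: c_def algebra_simps)
    moreover have "0 \<le> x - (a' + e / 2)" using x aa e by simp
    ultimately show ?thesis using n by simp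
  qed
  have "0 \<le> x * n - n + c * n'"
  proof (cases "c \<ge> 0")
    case True
    then show ?thesis using at_xn mult_left_mono[OF n1 True] by linarith
  next
    case False
    then show ?thesis using at_n mult_left_mono_neg[OF n2, of c] by linarith
  qed
  then show ?thesis by (simp add: c_def algebra_simps)
qed

lemma min_degree_ge_neighbourhood:
  assumes g: "simple_graph V E" and deg: "min_degree_ge V E (degree_threshold (k + 4) + \<epsilon>)"
    and "\<epsilon> > 0" and v: "v \<in> V"
  shows "min_degree_ge (neighbours E v) (induced E (neighbours E v)) (degree_threshold (k + 3) + \<epsilon> / 2)"
  unfolding min_degree_ge_def
proof
  fix u assume u: "u \<in> neighbours E v"
  define n where "n = real (card V)"
  define n' where "n' = real (card (neighbours E v))"
  define x where "x = degree_threshold (k + 4) + \<epsilon>"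
  have uV: "u \<in> V" using u neighbours_subset[OF g] by blast
  have "x * n \<le> n'"
    using min_degree_geD[OF deg v] by (simp add: x_def n_def n'_def degree_eq_card_neighbours[OF g])
  moreover have "n' \<le> n"
    using neighbours_subset[OF g] simple_graph_finite[OF g] by (simp add: n'_def n_def card_mono)
  ultimately have "(degree_threshold (k + 3) + \<epsilon> / 2) * n' \<le> x * n - n + n'"
    using min_degree_lt_1[OF g deg v] \<open>\<epsilon> > 0\<close>
    by (intro neighbourhood_degree_arith[OF degree_threshold_recurrence degree_threshold_add_3_le
          degree_threshold_add_3_le_1 x_def]) (auto simp: n_def x_def)
  also have "\<dots> \<le> real (degree (neighbours E v) (induced E (neighbours E v)) u)"
    using degree_induced_ge[OF g neighbours_subset[OF g] u] min_degree_geD[OF deg uV]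
    by (simp add: n_def n'_def x_def)
  finally show "(degree_threshold (k + 3) + \<epsilon> / 2) * n'
      \<le> real (degree (neighbours E v) (induced E (neighbours E v)) u)" .
qed

text \<open>With \<open>x = \<alpha> + \<epsilon>\<close>, every vertex misses at most \<open>b = n - x n\<close> vertices, so any \<open>k + 1\<close>
  vertices have at least \<open>(k + 1) x n - k n \<ge> 4n/(3k + 7)\<close> common neighbours.\<close>
lemma card_cliques_in_neighbourhood_ge:
  assumes g: "simple_graph V E" and deg: "min_degree_ge V E (degree_threshold (k + 4) + \<epsilon>)"
    and "\<epsilon> > 0" and v: "v \<in> V"
  shows "(4 / (3 * real k + 7) * real (card V)) ^ Suc k / fact (Suc k)
    \<le> real (card (cliques_in V E (Suc k) (neighbours E v)))"
proof -
  define n where "n = real (card V)"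
  define x where "x = degree_threshold (k + 4) + \<epsilon>"
  define b where "b = n - x * n"
  define m where "m = (real k + 1) * x * n - real k * n"
  have x1: "x < 1" using min_degree_lt_1[OF g deg v] by (simp add: x_def)
  have m_ge: "4 / (3 * real k + 7) * n \<le> m"
  proof -
    have "m = ((real k + 1) * degree_threshold (k + 4) - real k) * n + (real k + 1) * \<epsilon> * n"
      by (simp add: m_def x_def algebra_simps)
    then show ?thesis using \<open>\<epsilon> > 0\<close> by (simp add: degree_threshold_common_neighbourhood n_def)
  qed
  have "m ^ Suc k / fact (Suc k) \<le> real (card (cliques_in V E (Suc k) (neighbours E v)))"
  proof (rule card_cliques_in_lower_bound[OF g _ _ neighbours_subset[OF g]])
    show "real (card (V - neighbours E u)) \<le> b" if "u \<in> V" for u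
      using card_non_neighbours_le[OF g deg that] by (simp add: b_def n_def x_def)
    show "0 \<le> b" using x1 by (simp add: b_def n_def mult_le_cancel_right2)
    have "0 \<le> 4 / (3 * real k + 7) * n" by (simp add: n_def)
    then show "0 \<le> m" using m_ge by linarith
    show "real k * b + m \<le> real (card (neighbours E v))"
      using min_degree_geD[OF deg v]
      by (simp add: b_def m_def n_def x_def degree_eq_card_neighbours[OF g] algebra_simps)
  qed
  moreover have "(4 / (3 * real k + 7) * n) ^ Suc k / fact (Suc k) \<le> m ^ Suc k / fact (Suc k)"
    using m_ge by (intro divide_right_mono power_mono) (auto simp: n_def)
  ultimately have "(4 / (3 * real k + 7) * n) ^ Suc k / fact (Suc k)
      \<le> real (card (cliques_in V E (Suc k) (neighbours E v)))"
    by linarith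
  then show ?thesis unfolding n_def .
qed

section \<open>The base case \<open>t = 3\<close>\<close>

lemma sum_card_neighbours_in_ge:
  assumes g: "simple_graph V E" and deg: "min_degree_ge V E x" and S: "S \<subseteq> V"
  shows "real (card S) * (x * real (card V)) \<le> (\<Sum>w\<in>V. real (card {s\<in>S. E w s}))"
proof -
  have fV: "finite V" and fS: "finite S"
    using g S finite_subset simple_graph_finite by blast+
  have "\<forall>s\<in>S. card {w\<in>V. E w s} = degree V E s"
    using simple_graph_sym[OF g] by (auto simp: degree_def intro!: arg_cong[where f = card])
  then have "(\<Sum>w\<in>V. card {s\<in>S. E w s}) = (\<Sum>s\<in>S. degree V E s)"
    by (rule sum_multicount_gen[OF fV fS])
  moreover have "(\<Sum>s\<in>S. x * real (card V)) \<le> (\<Sum>s\<in>S. real (degree V E s))"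
    using S min_degree_geD[OF deg] by (intro sum_mono) auto
  ultimately show ?thesis by (metis of_nat_sum sum_constant)
qed

lemma card_common_neighbours_le_card_F_uv:
  assumes g: "simple_graph V E" and "s \<in> V" "s' \<in> V"
  shows "card {w\<in>V. E w s \<and> E w s'} \<le> card (F_uv V E 3 s s')"
proof (rule card_inj_on_le[where f = "\<lambda>w. {w}"])
  show "inj_on (\<lambda>w. {w}) {w\<in>V. E w s \<and> E w s'}" by (simp add: inj_on_def)
  show "(\<lambda>w. {w}) ` {w\<in>V. E w s \<and> E w s'} \<subseteq> F_uv V E 3 s s'"
    using assms simple_graph_sym[OF g] simple_graph_irrefl[OF g]
    by (fastforce simp: F_uv_def cliques_def is_clique_def card_insert_if)
  show "finite (F_uv V E 3 s s')" by (rule finite_F_uv[OF g])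
qed

lemma no_disjoint_tuple_3:
  assumes "\<epsilon> > 0"
  shows "no_disjoint_tuple 3 \<epsilon> (\<epsilon> / 4)"
  unfolding no_disjoint_tuple_def
proof (intro allI impI notI)
  fix V E assume g: "simple_graph V E" and deg: "min_degree_ge V E (degree_threshold 3 + \<epsilon>)"
    and "\<exists>S \<subseteq> V. card S = 3 + 1 \<and> pairwise_eps_disjoint V E 3 (\<epsilon> / 4) S"
  then obtain S where S: "S \<subseteq> V" "card S = 4" and dis: "pairwise_eps_disjoint V E 3 (\<epsilon> / 4) S"
    by auto
  have fV: "finite V" and fS: "finite S" using g S(1) finite_subset simple_graph_finite by blast+
  define n where "n = real (card V)"
  have "n > 0" using S fV by (auto simp: n_def card_gt_0_iff)
  have common: "(\<Sum>w\<in>V. of_bool (E w s \<and> E w s')) \<le> \<epsilon> / 4 * n"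
    if "s \<in> S" "s' \<in> S" "s \<noteq> s'" for s s'
  proof -
    have "(\<Sum>w\<in>V. of_bool (E w s \<and> E w s')) = real (card {w\<in>V. E w s \<and> E w s'})"
      using fV by (simp add: Int_def)
    also have "\<dots> \<le> real (card (F_uv V E 3 s s'))"
      using card_common_neighbours_le_card_F_uv[OF g] that S(1) by auto
    also have "\<dots> \<le> \<epsilon> / 4 * real (card (cliques V E 1))"
      using dis that by (simp add: pairwise_eps_disjoint_def eps_disjoint_def)
    also have "\<dots> \<le> \<epsilon> / 4 * n"
      using card_cliques_le_power[OF g, of 1] \<open>\<epsilon> > 0\<close> by (simp add: n_def)
    finally show ?thesis .
  qed
  have "4 * ((1 / 4 + \<epsilon>) * n) \<le> (\<Sum>w\<in>V. real (card {s\<in>S. E w s}))"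
    using sum_card_neighbours_in_ge[OF g deg S(1)] S(2) by (simp add: degree_threshold_def n_def)
  also have "\<dots> \<le> (\<Sum>w\<in>V. 1 + (\<Sum>s\<in>S. \<Sum>s'\<in>S-{s}. of_bool (E w s \<and> E w s')))"
    by (intro sum_mono card_le_1_plus_ordered_pairs[OF fS])
  also have "\<dots> = n + (\<Sum>s\<in>S. \<Sum>s'\<in>S-{s}. \<Sum>w\<in>V. of_bool (E w s \<and> E w s'))"
    by (simp add: sum.distrib n_def sum.swap[of _ V])
  also have "\<dots> \<le> n + real (card S) * (real (card S) - 1) * (\<epsilon> / 4 * n)"
    using sum_ordered_pairs_le[OF fS common] by simp
  finally show False using S(2) \<open>n > 0\<close> \<open>\<epsilon> > 0\<close> by (simp add: algebra_simps)
qed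

section \<open>Vertices adjacent to all but one vertex of a tuple\<close>

lemma card_adjacent_to_all_but_one_ge:
  assumes g: "simple_graph V E" and deg: "min_degree_ge V E (degree_threshold (k + 4) + \<epsilon>)"
    and S: "S \<subseteq> V" "card S = k + 5" and "1 \<le> k" "\<epsilon> > 0"
  shows "\<epsilon> * real (card V) \<le> real (card {w\<in>V. k + 4 \<le> card {s\<in>S. E w s}})"
proof -
  have fV: "finite V" and fS: "finite S" using g S(1) finite_subset simple_graph_finite by blast+
  define n where "n = real (card V)"
  define a where "a = degree_threshold (k + 4)"
  define T where "T = {w\<in>V. k + 4 \<le> card {s\<in>S. E w s}}"
  have "(real k + 5) * ((a + \<epsilon>) * n) \<le> (\<Sum>w\<in>V. real (card {s\<in>S. E w s}))"
    using sum_card_neighbours_in_ge[OF g deg S(1)] S(2) by (simp add: a_def n_def)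
  also have "\<dots> \<le> (\<Sum>w\<in>V. (real k + 3) + 2 * of_bool (k + 4 \<le> card {s\<in>S. E w s}))"
  proof (rule sum_mono)
    fix w
    have "card {s\<in>S. E w s} \<le> k + 5" using card_mono[OF fS, of "{s\<in>S. E w s}"] S(2) by auto
    then show "real (card {s\<in>S. E w s}) \<le> (real k + 3) + 2 * of_bool (k + 4 \<le> card {s\<in>S. E w s})"
      by auto
  qed
  also have "\<dots> = (real k + 3) * n + 2 * real (card T)"
  proof -
    have "(\<Sum>w\<in>V. of_bool (k + 4 \<le> card {s\<in>S. E w s})) = real (card T)"
      using fV by (simp add: T_def Int_def)
    then show ?thesis by (simp add: sum.distrib n_def flip: sum_distrib_left)
  qed
  finally have "(real k + 5) * ((a + \<epsilon>) * n) \<le> (real k + 3) * n + 2 * real (card T)" .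
  moreover have "(real k + 3) * n \<le> (real k + 5) * a * n"
    using \<open>1 \<le> k\<close> by (intro mult_right_mono) (simp_all add: a_def n_def degree_threshold_add_4 field_simps)
  moreover have "2 * \<epsilon> * n \<le> (real k + 5) * \<epsilon> * n"
    using \<open>\<epsilon> > 0\<close> by (intro mult_right_mono) (auto simp: n_def)
  ultimately show ?thesis by (simp add: T_def n_def algebra_simps)
qed

text \<open>In a \<open>K\<^sub>4\<close>-free graph every vertex of \<open>S\<close> sees at most two vertices of the triangle \<open>Q\<close>,
  while the three vertices of \<open>Q\<close> send 9 edges into \<open>S\<close>; so at least four vertices of \<open>S\<close> see
  exactly an edge of \<open>Q\<close>, and two of them see the same edge.\<close>
lemma triangle_eq_insert_F_uv:
  assumes g: "simple_graph V E" and kf: "Kt_free V E 4" and S: "S \<subseteq> V" "card S = 5"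
    and Q: "Q \<in> cliques V E 3" and deg_Q: "\<forall>q\<in>Q. card {s\<in>S. E q s} = 3"
  shows "\<exists>s\<in>S. \<exists>s'\<in>S-{s}. \<exists>K\<in>F_uv V E 4 s s'. \<exists>w\<in>V. Q = insert w K"
proof -
  have fS: "finite S" using S(1) g finite_subset simple_graph_finite by blast
  have fQ: "finite Q" and cQ: "card Q = 3" and QV: "Q \<subseteq> V"
    using Q finite_clique[OF g] by (auto simp: cliques_def is_clique_def)
  define f where "f s = {q\<in>Q. E s q}" for s
  define F where "F = {s\<in>S. card (f s) = 2}"
  have "{s\<in>S. E s q} = {s\<in>S. E q s}" for q using simple_graph_sym[OF g] by blast
  then have "\<forall>q\<in>Q. card {s\<in>S. E s q} = 3" using deg_Q by simp
  then have sum_9: "(\<Sum>s\<in>S. card (f s)) = 9"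
    using sum_multicount[OF fS fQ, of "\<lambda>s q. E s q" 3] cQ by (simp add: f_def)
  have "(\<Sum>s\<in>S. card (f s)) \<le> (\<Sum>s\<in>S. 1 + of_bool (s \<in> F))"
  proof (rule sum_mono)
    fix s assume s: "s \<in> S"
    have "f s \<noteq> Q"
    proof
      assume "f s = Q"
      then have "Q \<subseteq> neighbours E s" unfolding f_def neighbours_def by blast
      then have "insert s Q \<in> cliques V E (Suc 3)" using insert_mem_cliques(1)[OF g Q] s S(1) by blast
      then show False using kf by (simp add: Kt_free_def)
    qed
    then have "f s \<subset> Q" by (auto simp: f_def)
    then have "card (f s) < 3" using psubset_card_mono[OF fQ] cQ by simp
    then show "card (f s) \<le> 1 + of_bool (s \<in> F)" using s by (auto simp: F_def)
  qed
  also have "\<dots> = 5 + card F" using fS S(2) by (simp add: sum_Suc F_def Int_def)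
  finally have lt: "card {K. K \<subseteq> Q \<and> card K = 2} < card F"
    using sum_9 n_subsets[OF fQ, of 2] cQ by (simp add: choose_two)
  have "\<not> inj_on f F"
  proof
    assume "inj_on f F"
    moreover have "f ` F \<subseteq> {K. K \<subseteq> Q \<and> card K = 2}" by (auto simp: f_def F_def)
    moreover have "finite {K. K \<subseteq> Q \<and> card K = 2}" by (rule finite_subset[of _ "Pow Q"]) (use fQ in auto)
    ultimately show False using card_inj_on_le lt by (metis leD)
  qed
  then obtain s s' where ss: "s \<in> F" "s' \<in> F" "s \<noteq> s'" "f s = f s'"
    unfolding inj_on_def by blast
  define K where "K = f s"
  have KQ: "K \<subseteq> Q" and cK: "card K = 2" using ss(1) by (auto simp: K_def f_def F_def)
  have K: "K \<in> cliques V E 2"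
    using Q KQ cK by (auto simp: cliques_def is_clique_def)
  have "insert x K \<in> cliques V E 3" if "x \<in> F" "f x = K" for x
    using insert_mem_cliques(1)[OF g K, of x] that S(1) by (auto simp: f_def F_def neighbours_def)
  then have KF: "K \<in> F_uv V E 4 s s'" using ss K by (simp add: F_uv_def K_def)
  have "K \<noteq> Q" using cK cQ by auto
  then obtain w where w: "w \<in> Q" "w \<notin> K" using KQ by blast
  have "Q = insert w K"
    using w KQ cK cQ finite_subset[OF KQ fQ] by (intro card_subset_eq[symmetric, OF fQ]) auto
  then show ?thesis using ss w QV KF by (auto simp: F_def)
qed

lemma card_triangles_le:
  assumes g: "simple_graph V E" and kf: "Kt_free V E 4" and S: "S \<subseteq> V" "card S = 5"
    and dis: "pairwise_eps_disjoint V E 4 \<epsilon>' S" and "0 \<le> \<epsilon>'"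
    and B: "\<forall>q\<in>B. card {s\<in>S. E q s} = 3"
  shows "real (card (cliques_in V E 3 B)) \<le> 20 * \<epsilon>' * real (card V) ^ 3"
proof -
  have fV: "finite V" and fS: "finite S" using g S(1) finite_subset simple_graph_finite by blast+
  define n where "n = real (card V)"
  define P where "P = (SIGMA s:S. SIGMA s':S-{s}. SIGMA K:F_uv V E 4 s s'. V)"
  have fP: "finite P" using fS fV finite_F_uv[OF g] by (auto simp: P_def)
  have "cliques_in V E 3 B \<subseteq> (\<lambda>(s, s', K, w). insert w K) ` P"
  proof
    fix Q assume "Q \<in> cliques_in V E 3 B"
    then have "Q \<in> cliques V E 3" "\<forall>q\<in>Q. card {s\<in>S. E q s} = 3"
      using B by (auto simp: cliques_in_def)
    from triangle_eq_insert_F_uv[OF g kf S this]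
    show "Q \<in> (\<lambda>(s, s', K, w). insert w K) ` P" unfolding P_def by force
  qed
  then have "card (cliques_in V E 3 B) \<le> card ((\<lambda>(s, s', K, w). insert w K) ` P)"
    using fP by (intro card_mono) auto
  also have "\<dots> \<le> card P" using fP by (rule card_image_le)
  also have "\<dots> = (\<Sum>s\<in>S. \<Sum>s'\<in>S-{s}. card (F_uv V E 4 s s') * card V)"
    using fS fV finite_F_uv[OF g] by (simp add: P_def)
  finally have "real (card (cliques_in V E 3 B)) \<le> (\<Sum>s\<in>S. \<Sum>s'\<in>S-{s}. real (card (F_uv V E 4 s s')) * n)"
    by (simp add: n_def flip: of_nat_mult of_nat_sum)
  also have "\<dots> \<le> real (card S) * (real (card S) - 1) * (\<epsilon>' * n ^ 2 * n)"
  proof (rule sum_ordered_pairs_le[OF fS])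
    fix s s' assume "s \<in> S" "s' \<in> S" "s \<noteq> s'"
    then have "real (card (F_uv V E 4 s s')) \<le> \<epsilon>' * real (card (cliques V E 2))"
      using dis by (simp add: pairwise_eps_disjoint_def eps_disjoint_def)
    also have "\<dots> \<le> \<epsilon>' * n ^ 2"
      using card_cliques_le_power[OF g] \<open>0 \<le> \<epsilon>'\<close> by (simp add: n_def mult_left_mono)
    finally show "real (card (F_uv V E 4 s s')) * n \<le> \<epsilon>' * n ^ 2 * n"
      by (simp add: n_def mult_right_mono)
  qed
  finally show ?thesis using S(2) by (simp add: n_def power3_eq_cube power2_eq_square mult_ac)
qed

lemma card_adjacent_to_all_but_one_ge_K4_free:
  assumes g: "simple_graph V E" and kf: "Kt_free V E 4"
    and deg: "min_degree_ge V E (degree_threshold 4 + \<epsilon>)"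
    and S: "S \<subseteq> V" "card S = 5" and "\<epsilon> > 0"
    and dis: "pairwise_eps_disjoint V E 4 \<epsilon>' S" and "0 \<le> \<epsilon>'" "\<epsilon>' \<le> \<epsilon> ^ 3 / 4"
  shows "\<epsilon> * real (card V) \<le> real (card {w\<in>V. 4 \<le> card {s\<in>S. E w s}})"
proof (rule ccontr)
  have fV: "finite V" and fS: "finite S" using g S(1) finite_subset simple_graph_finite by blast+
  define n where "n = real (card V)"
  define T where "T = {w\<in>V. 4 \<le> card {s\<in>S. E w s}}"
  define B where "B = {w\<in>V. card {s\<in>S. E w s} = 3}"
  assume "\<not> \<epsilon> * real (card V) \<le> real (card T)"
  then have T_small: "real (card T) < \<epsilon> * n" by (simp add: n_def)
  obtain u where u: "u \<in> V" using S by fastforce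
  then have "n > 0" using fV by (auto simp: n_def card_gt_0_iff)
  have "5 * ((4 / 7 + \<epsilon>) * n) \<le> (\<Sum>w\<in>V. real (card {s\<in>S. E w s}))"
    using sum_card_neighbours_in_ge[OF g deg S(1)] S(2) by (simp add: degree_threshold_def n_def)
  also have "\<dots> \<le> (\<Sum>w\<in>V. 2 + of_bool (card {s\<in>S. E w s} = 3) + 3 * of_bool (4 \<le> card {s\<in>S. E w s}))"
  proof (rule sum_mono)
    fix w
    have "card {s\<in>S. E w s} \<le> 5" using card_mono[OF fS, of "{s\<in>S. E w s}"] S(2) by auto
    then show "real (card {s\<in>S. E w s})
      \<le> 2 + of_bool (card {s\<in>S. E w s} = 3) + 3 * of_bool (4 \<le> card {s\<in>S. E w s})"
      by auto
  qed
  also have "\<dots> = 2 * n + real (card B) + 3 * real (card T)"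
    using fV by (simp add: sum.distrib n_def B_def T_def Int_def flip: sum_distrib_left)
  finally have B_large: "2 * (n - (4 / 7 + \<epsilon>) * n) + 4 * \<epsilon> * n \<le> real (card B)"
    using T_small by (simp add: algebra_simps)
  have "(4 * \<epsilon> * n) ^ Suc 2 / fact (Suc 2) \<le> real (card (cliques_in V E (Suc 2) B))"
  proof (rule card_cliques_in_lower_bound[OF g])
    show "real (card (V - neighbours E w)) \<le> n - (4 / 7 + \<epsilon>) * n" if "w \<in> V" for w
      using card_non_neighbours_le[OF g deg that] by (simp add: degree_threshold_def n_def)
    show "0 \<le> n - (4 / 7 + \<epsilon>) * n"
      using min_degree_lt_1[OF g deg u] \<open>n > 0\<close> by (simp add: degree_threshold_def mult_le_cancel_right2)
  qed (use B_large \<open>\<epsilon> > 0\<close> \<open>n > 0\<close> in \<open>auto simp: B_def\<close>)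
  then have "32 / 3 * (\<epsilon> * n) ^ 3 \<le> real (card (cliques_in V E 3 B))"
    by (simp add: numeral_3_eq_3 fact_numeral mult_ac)
  also have "\<dots> \<le> 20 * \<epsilon>' * n ^ 3"
    using card_triangles_le[OF g kf S dis \<open>0 \<le> \<epsilon>'\<close>] by (simp add: B_def n_def)
  also have "\<dots> \<le> 5 * (\<epsilon> * n) ^ 3"
    using \<open>\<epsilon>' \<le> \<epsilon> ^ 3 / 4\<close> \<open>n > 0\<close> by (simp add: power_mult_distrib)
  finally show False using \<open>\<epsilon> > 0\<close> \<open>n > 0\<close> by simp
qed

lemma card_adjacent_to_all_but_one_ge_Kt_free:
  assumes g: "simple_graph V E" and kf: "Kt_free V E (k + 4)"
    and deg: "min_degree_ge V E (degree_threshold (k + 4) + \<epsilon>)"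
    and S: "S \<subseteq> V" "card S = k + 5" and "\<epsilon> > 0"
    and dis: "pairwise_eps_disjoint V E (k + 4) \<epsilon>' S" and "0 \<le> \<epsilon>'" "\<epsilon>' \<le> \<epsilon> ^ 3 / 4"
  shows "\<epsilon> * real (card V) \<le> real (card {w\<in>V. k + 4 \<le> card {s\<in>S. E w s}})"
proof (cases "k = 0")
  case True
  then show ?thesis
    using card_adjacent_to_all_but_one_ge_K4_free[of V E \<epsilon> S \<epsilon>'] assms by simp
next
  case False
  then show ?thesis using card_adjacent_to_all_but_one_ge[OF g deg S _ \<open>\<epsilon> > 0\<close>] by simp
qed

section \<open>The induction step\<close>

lemma sum_F_uv_neighbourhood_gt:
  assumes IH: "no_disjoint_tuple (k + 3) (\<epsilon> / 2) \<epsilon>''" and "\<epsilon>'' > 0"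
    and g: "simple_graph V E" and kf: "Kt_free V E (k + 4)"
    and deg: "min_degree_ge V E (degree_threshold (k + 4) + \<epsilon>)" and "\<epsilon> > 0"
    and v: "v \<in> V" and fS: "finite S" and S_nb: "k + 4 \<le> card {s\<in>S. E v s}"
  shows "\<epsilon>'' * ((4 / (3 * real k + 7) * real (card V)) ^ (k + 1) / fact (k + 1))
    < (\<Sum>s\<in>S. \<Sum>s'\<in>S-{s}. real (card (F_uv (neighbours E v) (induced E (neighbours E v)) (k + 3) s s')))"
proof -
  define N where "N = neighbours E v"
  have "simple_graph N (induced E N)"
    using simple_graph_induced[OF g neighbours_subset[OF g]] by (simp add: N_def)
  moreover have "Kt_free N (induced E N) (k + 3)"
    using Kt_free_neighbourhood[OF g _ v, of "k + 3"] kf by (simp add: N_def add.commute)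
  moreover have "min_degree_ge N (induced E N) (degree_threshold (k + 3) + \<epsilon> / 2)"
    using min_degree_ge_neighbourhood[OF g deg \<open>\<epsilon> > 0\<close> v] by (simp add: N_def)
  ultimately have no_tuple: "\<not> (\<exists>S' \<subseteq> N. card S' = k + 4 \<and> pairwise_eps_disjoint N (induced E N) (k + 3) \<epsilon>'' S')"
    using IH unfolding no_disjoint_tuple_def by (simp add: add.commute)
  obtain S' where S': "S' \<subseteq> {s\<in>S. E v s}" "card S' = k + 4"
    using S_nb by (meson obtain_subset_with_card_n)
  then have "S' \<subseteq> N" by (auto simp: N_def neighbours_def)
  then obtain s s' where ss': "s \<in> S'" "s' \<in> S'" "s \<noteq> s'"
    and "\<not> eps_disjoint N (induced E N) (k + 3) \<epsilon>'' s s'"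
    using no_tuple S'(2) by (auto simp: pairwise_eps_disjoint_def)
  then have F_large: "\<epsilon>'' * real (card (cliques_in V E (k + 1) N)) < real (card (F_uv N (induced E N) (k + 3) s s'))"
    using cliques_induced[OF neighbours_subset[OF g], of v] by (simp add: eps_disjoint_def N_def)
  have "\<epsilon>'' * ((4 / (3 * real k + 7) * real (card V)) ^ (k + 1) / fact (k + 1))
      \<le> \<epsilon>'' * real (card (cliques_in V E (k + 1) N))"
    using mult_left_mono[OF card_cliques_in_neighbourhood_ge[OF g deg \<open>\<epsilon> > 0\<close> v], of \<epsilon>''] \<open>\<epsilon>'' > 0\<close>
    by (simp only: N_def Suc_eq_plus1 less_imp_le)
  also have "\<dots> < real (card (F_uv N (induced E N) (k + 3) s s'))" by (rule F_large)
  also have "\<dots> \<le> (\<Sum>s'\<in>S-{s}. real (card (F_uv N (induced E N) (k + 3) s s')))"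
    using ss' S'(1) fS by (intro member_le_sum) auto
  also have "\<dots> \<le> (\<Sum>s\<in>S. \<Sum>s'\<in>S-{s}. real (card (F_uv N (induced E N) (k + 3) s s')))"
    using ss' S'(1) fS by (intro member_le_sum[where f = "\<lambda>s. \<Sum>s'\<in>S-{s}. _ s s'"] sum_nonneg) auto
  finally show ?thesis by (simp add: N_def)
qed

lemma sum_F_uv_neighbourhoods_pairs_le:
  assumes g: "simple_graph V E" and fS: "finite S"
    and dis: "pairwise_eps_disjoint V E (k + 4) \<epsilon>' S" and "0 \<le> \<epsilon>'"
  shows "(\<Sum>v\<in>V. \<Sum>s\<in>S. \<Sum>s'\<in>S-{s}.
      real (card (F_uv (neighbours E v) (induced E (neighbours E v)) (k + 3) s s')))
    \<le> real (card S) * (real (card S) - 1) * (real (k + 2) * (\<epsilon>' * real (card V) ^ (k + 2)))"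
proof -
  have "(\<Sum>v\<in>V. \<Sum>s\<in>S. \<Sum>s'\<in>S-{s}.
      real (card (F_uv (neighbours E v) (induced E (neighbours E v)) (k + 3) s s')))
    = (\<Sum>s\<in>S. \<Sum>s'\<in>S-{s}. \<Sum>v\<in>V.
      real (card (F_uv (neighbours E v) (induced E (neighbours E v)) (k + 3) s s')))"
    by (simp add: sum.swap[of _ V])
  also have "\<dots> \<le> real (card S) * (real (card S) - 1) * (real (k + 2) * (\<epsilon>' * real (card V) ^ (k + 2)))"
  proof (rule sum_ordered_pairs_le[OF fS])
    fix s s' assume ss': "s \<in> S" "s' \<in> S" "s \<noteq> s'"
    have "k + 1 + 2 = k + 3" "k + 1 + 3 = k + 4" "k + 1 + 1 = k + 2" by simp_all
    then have "(\<Sum>v\<in>V. card (F_uv (neighbours E v) (induced E (neighbours E v)) (k + 3) s s'))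
        \<le> (k + 2) * card (F_uv V E (k + 4) s s')"
      using sum_card_F_uv_neighbourhoods_le[OF g, of "k + 1" s s'] by (simp only:)
    then have "(\<Sum>v\<in>V. real (card (F_uv (neighbours E v) (induced E (neighbours E v)) (k + 3) s s')))
        \<le> real (k + 2) * real (card (F_uv V E (k + 4) s s'))"
      by (simp only: of_nat_le_iff flip: of_nat_sum of_nat_mult)
    also have "\<dots> \<le> real (k + 2) * (\<epsilon>' * real (card (cliques V E (k + 2))))"
      using dis ss' by (simp add: pairwise_eps_disjoint_def eps_disjoint_def)
    also have "\<dots> \<le> real (k + 2) * (\<epsilon>' * real (card V) ^ (k + 2))"
      using \<open>0 \<le> \<epsilon>'\<close> by (intro mult_left_mono card_cliques_le_power[OF g]) simp_all
    finally show "(\<Sum>v\<in>V. real (card (F_uv (neighbours E v) (induced E (neighbours E v)) (k + 3) s s')))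
        \<le> real (k + 2) * (\<epsilon>' * real (card V) ^ (k + 2))" .
  qed
  finally show ?thesis .
qed

lemma no_disjoint_tuple_step:
  assumes IH: "no_disjoint_tuple (k + 3) (\<epsilon> / 2) \<epsilon>''" and "\<epsilon> > 0" "\<epsilon>'' > 0"
    and "0 \<le> \<epsilon>'" "\<epsilon>' \<le> \<epsilon> ^ 3 / 4"
    and small: "\<epsilon>' * (real (k + 5) * real (k + 4) * real (k + 2))
      \<le> \<epsilon>'' * \<epsilon> * ((4 / (3 * real k + 7)) ^ (k + 1) / fact (k + 1))"
  shows "no_disjoint_tuple (k + 4) \<epsilon> \<epsilon>'"
  unfolding no_disjoint_tuple_def
proof (intro allI impI notI)
  fix V E assume g: "simple_graph V E" and kf: "Kt_free V E (k + 4)"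
    and deg: "min_degree_ge V E (degree_threshold (k + 4) + \<epsilon>)"
    and "\<exists>S \<subseteq> V. card S = k + 4 + 1 \<and> pairwise_eps_disjoint V E (k + 4) \<epsilon>' S"
  then obtain S where S: "S \<subseteq> V" "card S = k + 5" and dis: "pairwise_eps_disjoint V E (k + 4) \<epsilon>' S"
    by auto
  have fV: "finite V" and fS: "finite S" using g S(1) finite_subset simple_graph_finite by blast+
  define n where "n = real (card V)"
  define c where "c = (4 / (3 * real k + 7)) ^ (k + 1) / fact (k + 1)"
  define T where "T = {w\<in>V. k + 4 \<le> card {s\<in>S. E w s}}"
  define Fs where "Fs v = (\<Sum>s\<in>S. \<Sum>s'\<in>S-{s}.
    real (card (F_uv (neighbours E v) (induced E (neighbours E v)) (k + 3) s s')))" for v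
  have "n > 0" using S fV by (auto simp: n_def card_gt_0_iff)
  have T_large: "\<epsilon> * n \<le> real (card T)"
    using card_adjacent_to_all_but_one_ge_Kt_free[OF g kf deg S \<open>\<epsilon> > 0\<close> dis \<open>0 \<le> \<epsilon>'\<close> \<open>\<epsilon>' \<le> \<epsilon> ^ 3 / 4\<close>]
    by (simp add: T_def n_def)
  have "real (card T) * (\<epsilon>'' * (c * n ^ (k + 1))) < (\<Sum>v\<in>T. Fs v)"
  proof -
    have "0 < \<epsilon> * n" using \<open>\<epsilon> > 0\<close> \<open>n > 0\<close> by simp
    then have "T \<noteq> {}" using T_large by auto
    moreover have "\<epsilon>'' * (c * n ^ (k + 1)) < Fs v" if "v \<in> T" for v
    proof -
      have "(4 / (3 * real k + 7) * n) ^ (k + 1) / fact (k + 1) = c * n ^ (k + 1)"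
        unfolding c_def power_mult_distrib by (simp only: times_divide_eq_left)
      moreover have "v \<in> V" "k + 4 \<le> card {s\<in>S. E v s}" using that by (auto simp: T_def)
      ultimately show ?thesis
        using sum_F_uv_neighbourhood_gt[OF IH \<open>\<epsilon>'' > 0\<close> g kf deg \<open>\<epsilon> > 0\<close> _ fS]
        by (simp only: Fs_def n_def[symmetric])
    qed
    ultimately show ?thesis using sum_strict_mono[of T "\<lambda>_. \<epsilon>'' * (c * n ^ (k + 1))" Fs] fV
      by (simp add: T_def)
  qed
  also have "\<dots> \<le> (\<Sum>v\<in>V. Fs v)"
    using fV by (intro sum_mono2) (auto simp: T_def Fs_def intro!: sum_nonneg)
  also have "\<dots> \<le> \<epsilon>' * (real (k + 5) * real (k + 4) * real (k + 2)) * n ^ (k + 2)"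
    using sum_F_uv_neighbourhoods_pairs_le[OF g fS dis \<open>0 \<le> \<epsilon>'\<close>] S(2)
    by (simp add: Fs_def n_def algebra_simps)
  also have "\<dots> \<le> (\<epsilon> * n) * (\<epsilon>'' * (c * n ^ (k + 1)))"
    using mult_right_mono[OF small, of "n ^ (k + 2)"] \<open>n > 0\<close> by (simp add: c_def mult_ac)
  also have "\<dots> \<le> real (card T) * (\<epsilon>'' * (c * n ^ (k + 1)))"
    using T_large \<open>\<epsilon>'' > 0\<close> \<open>n > 0\<close> by (intro mult_right_mono) (simp_all add: c_def)
  finally show False by simp
qed

lemma ex_no_disjoint_tuple:
  assumes "3 \<le> t" "\<epsilon> > 0"
  shows "\<exists>\<epsilon>'>0. no_disjoint_tuple t \<epsilon> \<epsilon>'"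
proof -
  obtain k where t: "t = k + 3" using assms(1) by (metis add.commute le_iff_add)
  have "\<exists>\<epsilon>'>0. no_disjoint_tuple (k + 3) \<epsilon> \<epsilon>'" if "\<epsilon> > 0" for \<epsilon>
    using that
  proof (induction k arbitrary: \<epsilon>)
    case 0
    then have "\<epsilon> / 4 > 0" "no_disjoint_tuple 3 \<epsilon> (\<epsilon> / 4)" by (simp_all add: no_disjoint_tuple_3)
    then show ?case by (metis add_0)
  next
    case (Suc k)
    obtain \<epsilon>'' where "\<epsilon>'' > 0" and IH: "no_disjoint_tuple (k + 3) (\<epsilon> / 2) \<epsilon>''"
      using Suc.IH[of "\<epsilon> / 2"] Suc.prems by auto
    define c where "c = (4 / (3 * real k + 7)) ^ (k + 1) / fact (k + 1)"
    define K where "K = real (k + 5) * real (k + 4) * real (k + 2)"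
    define \<epsilon>' where "\<epsilon>' = min (\<epsilon>'' * \<epsilon> * c / K) (\<epsilon> ^ 3 / 4)"
    have "c > 0" "K > 0" by (simp_all add: c_def K_def)
    then have "\<epsilon>' > 0" using \<open>\<epsilon>'' > 0\<close> Suc.prems by (simp add: \<epsilon>'_def)
    moreover have "no_disjoint_tuple (k + 4) \<epsilon> \<epsilon>'"
    proof (rule no_disjoint_tuple_step[OF IH Suc.prems \<open>\<epsilon>'' > 0\<close>])
      show "0 \<le> \<epsilon>'" using \<open>\<epsilon>' > 0\<close> by simp
      show "\<epsilon>' \<le> \<epsilon> ^ 3 / 4" unfolding \<epsilon>'_def by (rule min.cobounded2)
      have "\<epsilon>' * K \<le> \<epsilon>'' * \<epsilon> * c"
        using \<open>K > 0\<close> by (simp add: \<epsilon>'_def pos_le_divide_eq[symmetric])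
      then show "\<epsilon>' * (real (k + 5) * real (k + 4) * real (k + 2))
          \<le> \<epsilon>'' * \<epsilon> * ((4 / (3 * real k + 7)) ^ (k + 1) / fact (k + 1))"
        unfolding K_def c_def .
    qed
    ultimately show ?case by (auto simp: add.commute add.left_commute)
  qed
  then show ?thesis using t assms(2) by blast
qed

lemma regular_imp_min_degree_ge:
  "regular V E d \<Longrightarrow> x * real (card V) \<le> real d \<Longrightarrow> min_degree_ge V E x"
  by (simp add: regular_def min_degree_ge_def)

theorem lemma6p9:
  fixes t :: nat and \<epsilon> :: real
  assumes "t \<ge> 3" and "\<epsilon> > 0"
  shows "\<exists>\<epsilon>'>0. \<forall>(V :: nat set) (E :: nat \<Rightarrow> nat \<Rightarrow> bool) (n :: nat) (d :: nat).
           simple_graph V E \<longrightarrow> card V = n \<longrightarrow> Kt_free V E t \<longrightarrow> regular V E d \<longrightarrow>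
           real d \<ge> ((3 * real t - 8) / (3 * real t - 5) + \<epsilon>) * real n \<longrightarrow>
           \<not> (\<exists>S \<subseteq> V. card S = t + 1 \<and>
                (\<forall>u\<in>S. \<forall>v\<in>S. u \<noteq> v \<longrightarrow> eps_disjoint V E t \<epsilon>' u v))"
proof -
  obtain \<epsilon>' where "\<epsilon>' > 0" and "no_disjoint_tuple t \<epsilon> \<epsilon>'"
    using ex_no_disjoint_tuple[OF assms] by blast
  then show ?thesis
    unfolding no_disjoint_tuple_def pairwise_eps_disjoint_def degree_threshold_def
    using regular_imp_min_degree_ge by blast
qed

end
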